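(* Let $\mathcal{X}=({\bm X},m^{\bm X}_\bullet,\nu^{\bm X})$, $\mathcal{Y}=({\bm Y},m^{\bm Y}_\bullet,\nu^{\bm Y})$ be Markov chains on finite sets with $n=|{\bm X}|$, $m=|{\bm Y}|$, $C\in\mathbb{R}_+^{n\times m}$ a cost matrix, $\delta\in(0,1]$ and $\epsilon\ge0$. Then the limit $d^{\delta,(\infty)}_{\mathrm{WL},\epsilon}(\mathcal{X},\mathcal{Y};C):=\lim_{k\to\infty}d^{\delta,(k)}_{\mathrm{WL},\epsilon}(\mathcal{X},\mathcal{Y};C)$ exists, equals $d^\epsilon_{\mathrm W}(\nu^{\bm X},\nu^{\bm Y};C^{\epsilon,\delta,(\infty)})$, and for every $k\in\mathbb{N}$, $$\big|d^{\delta,(k)}_{\mathrm{WL},\epsilon}(\mathcal{X},\mathcal{Y};C)-d^{\delta,(\infty)}_{\mathrm{WL},\epsilon}(\mathcal{X},\mathcal{Y};C)\big|\le\frac{(1-\delta)^k}{\delta}\big(2\|C\|_\infty+\epsilon\log(nm)\big).$$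
   Context: For $\alpha\in\mathcal{P}({\bm X}),\beta\in\mathcal{P}({\bm Y})$, cost $D$ and $\epsilon\ge0$, $d^{\epsilon}_{\mathrm W}(\alpha,\beta;D)=\min_{P\in\mathcal{C}(\alpha,\beta)}\sum_{i,j}P_{ij}D_{ij}+\epsilon\sum_{i,j}P_{ij}\log P_{ij}$, with $\mathcal{C}(\alpha,\beta)$ the set of couplings. Define $C^{\epsilon,\delta,(0)}=C$, $C^{\epsilon,\delta,(l)}_{ij}=\delta C_{ij}+(1-\delta)d^\epsilon_{\mathrm W}(m^{\bm X}_i,m^{\bm Y}_j;C^{\epsilon,\delta,(l-1)})$, and $d^{\delta,(k)}_{\mathrm{WL},\epsilon}(\mathcal{X},\mathcal{Y};C)=d^\epsilon_{\mathrm W}(\nu^{\bm X},\nu^{\bm Y};C^{\epsilon,\delta,(k)})$ for $k\in\mathbb{N}$. $C^{\epsilon,\delta,(\infty)}$ denotes the unique fixed point of $D\mapsto\big(\delta C_{ij}+(1-\delta)d^\epsilon_{\mathrm W}(m^{\bm X}_i,m^{\bm Y}_j;D)\big)_{i,j}$ (equivalently $\lim_k C^{\epsilon,\delta,(k)}$). $\|\cdot\|_\infty$ is the entrywise max norm. *)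

theory Defs
  imports "HOL-Analysis.Analysis"
begin

definition prob_vec :: "('x::finite \<Rightarrow> real) \<Rightarrow> bool" where
  "prob_vec p \<longleftrightarrow> (\<forall>i. p i \<ge> 0) \<and> (\<Sum>i\<in>UNIV. p i) = 1"

text \<open>A Markov chain (X, m_bullet, nu): transition kernel m (row i is m_i) and distribution nu.\<close>
definition markov_chain :: "('x::finite \<Rightarrow> 'x \<Rightarrow> real) \<Rightarrow> ('x \<Rightarrow> real) \<Rightarrow> bool" where
  "markov_chain m \<nu> \<longleftrightarrow> (\<forall>i. prob_vec (m i)) \<and> prob_vec \<nu>"

definition couplings :: "('x::finite \<Rightarrow> real) \<Rightarrow> ('y::finite \<Rightarrow> real) \<Rightarrow> ('x \<Rightarrow> 'y \<Rightarrow> real) set" where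
  "couplings \<alpha> \<beta> = {P. (\<forall>i j. P i j \<ge> 0) \<and> (\<forall>i. (\<Sum>j\<in>UNIV. P i j) = \<alpha> i)
                          \<and> (\<forall>j. (\<Sum>i\<in>UNIV. P i j) = \<beta> j)}"

definition xlogx :: "real \<Rightarrow> real" where
  "xlogx t = (if t = 0 then 0 else t * ln t)"

definition ot_cost :: "real \<Rightarrow> ('x::finite \<Rightarrow> 'y::finite \<Rightarrow> real) \<Rightarrow> ('x \<Rightarrow> 'y \<Rightarrow> real) \<Rightarrow> real" where
  "ot_cost \<epsilon> D P = (\<Sum>i\<in>UNIV. \<Sum>j\<in>UNIV. P i j * D i j) + \<epsilon> * (\<Sum>i\<in>UNIV. \<Sum>j\<in>UNIV. xlogx (P i j))"

text \<open>Entropic Wasserstein distance d^eps_W(alpha,beta;D) (the minimum is attained; Inf = min).\<close>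
definition dW :: "real \<Rightarrow> ('x::finite \<Rightarrow> real) \<Rightarrow> ('y::finite \<Rightarrow> real) \<Rightarrow> ('x \<Rightarrow> 'y \<Rightarrow> real) \<Rightarrow> real" where
  "dW \<epsilon> \<alpha> \<beta> D = (INF P \<in> couplings \<alpha> \<beta>. ot_cost \<epsilon> D P)"

definition WL_step :: "real \<Rightarrow> real \<Rightarrow> ('x::finite \<Rightarrow> 'x \<Rightarrow> real) \<Rightarrow> ('y::finite \<Rightarrow> 'y \<Rightarrow> real)
    \<Rightarrow> ('x \<Rightarrow> 'y \<Rightarrow> real) \<Rightarrow> ('x \<Rightarrow> 'y \<Rightarrow> real) \<Rightarrow> ('x \<Rightarrow> 'y \<Rightarrow> real)" where
  "WL_step \<epsilon> \<delta> mX mY C D = (\<lambda>i j. \<delta> * C i j + (1 - \<delta>) * dW \<epsilon> (mX i) (mY j) D)"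

primrec C_iter :: "real \<Rightarrow> real \<Rightarrow> ('x::finite \<Rightarrow> 'x \<Rightarrow> real) \<Rightarrow> ('y::finite \<Rightarrow> 'y \<Rightarrow> real)
    \<Rightarrow> ('x \<Rightarrow> 'y \<Rightarrow> real) \<Rightarrow> nat \<Rightarrow> ('x \<Rightarrow> 'y \<Rightarrow> real)" where
  "C_iter \<epsilon> \<delta> mX mY C 0 = C"
| "C_iter \<epsilon> \<delta> mX mY C (Suc l) = WL_step \<epsilon> \<delta> mX mY C (C_iter \<epsilon> \<delta> mX mY C l)"

definition C_inf :: "real \<Rightarrow> real \<Rightarrow> ('x::finite \<Rightarrow> 'x \<Rightarrow> real) \<Rightarrow> ('y::finite \<Rightarrow> 'y \<Rightarrow> real)
    \<Rightarrow> ('x \<Rightarrow> 'y \<Rightarrow> real) \<Rightarrow> ('x \<Rightarrow> 'y \<Rightarrow> real)" where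
  "C_inf \<epsilon> \<delta> mX mY C = (THE D. WL_step \<epsilon> \<delta> mX mY C D = D)"

definition dWL :: "real \<Rightarrow> real \<Rightarrow> ('x::finite \<Rightarrow> 'x \<Rightarrow> real) \<Rightarrow> ('x \<Rightarrow> real)
    \<Rightarrow> ('y::finite \<Rightarrow> 'y \<Rightarrow> real) \<Rightarrow> ('y \<Rightarrow> real) \<Rightarrow> ('x \<Rightarrow> 'y \<Rightarrow> real) \<Rightarrow> nat \<Rightarrow> real" where
  "dWL \<epsilon> \<delta> mX \<nu>X mY \<nu>Y C k = dW \<epsilon> \<nu>X \<nu>Y (C_iter \<epsilon> \<delta> mX mY C k)"

definition max_norm :: "('x::finite \<Rightarrow> 'y::finite \<Rightarrow> real) \<Rightarrow> real" where
  "max_norm C = Max {\<bar>C i j\<bar> | i j. True}"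

end

theory Submission
  imports Defs
begin

(* Every coupling has total mass one, so replacing the cost D by D' changes the entropic cost of
   each coupling, and hence its infimum dW, by at most max_norm (D - D'). The update
   D |-> delta C + (1 - delta) dW (m_i, m_j; D) is therefore a (1 - delta)-contraction for the max
   norm, and Banach's argument puts the k-th iterate within (1 - delta)^k / delta times the first
   displacement of the fixed point. As the entropy of a coupling lies between -log(nm) and 0, that
   displacement is at most max_norm C + eps log(nm); the Lipschitz bound for dW then transfers the
   estimate from the cost matrices to the values d_WL. *)

lemma max_norm_le_iff:
  "max_norm (D :: 'x::finite \<Rightarrow> 'y::finite \<Rightarrow> real) \<le> b \<longleftrightarrow> (\<forall>i j. \<bar>D i j\<bar> \<le> b)"
proof -
  have "{\<bar>D i j\<bar> | i j. True} = (\<lambda>(i, j). \<bar>D i j\<bar>) ` UNIV" by auto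
  then show ?thesis unfolding max_norm_def by (simp add: Max_le_iff)
qed

lemma abs_le_max_norm: "\<bar>D i j\<bar> \<le> max_norm (D :: 'x::finite \<Rightarrow> 'y::finite \<Rightarrow> real)"
  using max_norm_le_iff[of D "max_norm D"] by simp

lemma max_norm_nonneg: "0 \<le> max_norm (D :: 'x::finite \<Rightarrow> 'y::finite \<Rightarrow> real)"
  using abs_le_max_norm[of D] abs_ge_zero order_trans by blast

lemma max_norm_minus_commute:
  "max_norm (D - D') = max_norm (D' - D :: 'x::finite \<Rightarrow> 'y::finite \<Rightarrow> real)"
  by (simp add: max_norm_def abs_minus_commute)

lemma max_norm_triangle:
  "max_norm (A - C) \<le> max_norm (A - B) + max_norm (B - C :: 'x::finite \<Rightarrow> 'y::finite \<Rightarrow> real)"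
  unfolding max_norm_le_iff
proof (intro allI)
  fix i j
  have "\<bar>A i j - C i j\<bar> \<le> \<bar>A i j - B i j\<bar> + \<bar>B i j - C i j\<bar>" by linarith
  then show "\<bar>(A - C) i j\<bar> \<le> max_norm (A - B) + max_norm (B - C)"
    using abs_le_max_norm[of "A - B" i j] abs_le_max_norm[of "B - C" i j] by simp
qed

lemma max_norm_le_0_imp_eq:
  "max_norm (D - D' :: 'x::finite \<Rightarrow> 'y::finite \<Rightarrow> real) \<le> 0 \<Longrightarrow> D = D'"
  unfolding max_norm_le_iff by (auto intro!: ext)

context
  fixes F :: "('x::finite \<Rightarrow> 'y::finite \<Rightarrow> real) \<Rightarrow> 'x \<Rightarrow> 'y \<Rightarrow> real" and q :: real
  assumes contraction: "\<And>D D'. max_norm (F D - F D') \<le> q * max_norm (D - D')"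
    and q_nonneg: "0 \<le> q" and q_less_1: "q < 1"
begin

lemma contraction_dist_le:
  "max_norm (D - D') \<le> (max_norm (F D - D) + max_norm (F D' - D')) / (1 - q)"
proof -
  have "max_norm (D - D') \<le> max_norm (D - F D) + max_norm (F D - F D') + max_norm (F D' - D')"
    using max_norm_triangle[where A = D and B = "F D" and C = D']
      max_norm_triangle[where A = "F D" and B = "F D'" and C = D'] by linarith
  then have "(1 - q) * max_norm (D - D') \<le> max_norm (F D - D) + max_norm (F D' - D')"
    using contraction[of D D'] max_norm_minus_commute[of D "F D"] by (simp add: algebra_simps)
  then show ?thesis using q_less_1 by (simp add: field_simps)
qed

lemma contraction_fixpoint_unique: "F D = D \<Longrightarrow> F D' = D' \<Longrightarrow> D = D'"
  using contraction_dist_le[of D D'] by (intro max_norm_le_0_imp_eq) (simp add: max_norm_def)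

context
  fixes x :: "nat \<Rightarrow> 'x \<Rightarrow> 'y \<Rightarrow> real"
  assumes x_Suc: "\<And>k. x (Suc k) = F (x k)"
begin

lemma contraction_iterate_step: "max_norm (x (Suc k) - x k) \<le> q ^ k * max_norm (x 1 - x 0)"
proof (induction k)
  case (Suc k)
  have "max_norm (x (Suc (Suc k)) - x (Suc k)) \<le> q * max_norm (x (Suc k) - x k)"
    unfolding x_Suc[of "Suc k"] x_Suc[of k] by (rule contraction)
  also have "\<dots> \<le> q * (q ^ k * max_norm (x 1 - x 0))"
    using Suc.IH q_nonneg by (rule mult_left_mono)
  finally show ?case by (simp only: power_Suc mult.assoc)
qed simp

lemma contraction_iterates_dist:
  "max_norm (x m - x k) \<le> (q ^ m + q ^ k) * (max_norm (x 1 - x 0) / (1 - q))"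
proof -
  have "max_norm (x m - x k) \<le> (max_norm (x (Suc m) - x m) + max_norm (x (Suc k) - x k)) / (1 - q)"
    using contraction_dist_le[of "x m" "x k"] by (simp only: x_Suc)
  also have "\<dots> \<le> (q ^ m * max_norm (x 1 - x 0) + q ^ k * max_norm (x 1 - x 0)) / (1 - q)"
    using contraction_iterate_step[of m] contraction_iterate_step[of k] q_less_1
    by (intro divide_right_mono add_mono) auto
  finally show ?thesis by (simp add: algebra_simps)
qed

lemma contraction_iterates_Cauchy: "Cauchy (\<lambda>k. x k i j)"
proof (rule metric_CauchyI)
  fix e :: real assume "0 < e"
  let ?c = "max_norm (x 1 - x 0) / (1 - q)"
  have "(\<lambda>n. q ^ n * ?c) \<longlonglongrightarrow> 0"
    using q_nonneg q_less_1 by (intro tendsto_mult_left_zero LIMSEQ_power_zero) auto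
  from order_tendstoD(2)[OF this, of "e / 2"] \<open>0 < e\<close>
  obtain N where N: "\<And>n. n \<ge> N \<Longrightarrow> q ^ n * ?c < e / 2"
    unfolding eventually_sequentially by auto
  have "dist (x m i j) (x n i j) < e" if "m \<ge> N" "n \<ge> N" for m n
  proof -
    have "dist (x m i j) (x n i j) \<le> (q ^ m + q ^ n) * ?c"
      using contraction_iterates_dist[of m n] abs_le_max_norm[of "x m - x n" i j]
      by (simp add: dist_real_def)
    then show ?thesis using N[OF that(1)] N[OF that(2)] unfolding distrib_right by linarith
  qed
  then show "\<exists>M. \<forall>m\<ge>M. \<forall>n\<ge>M. dist (x m i j) (x n i j) < e" by blast
qed

lemma contraction_iterates_tail:
  assumes L: "\<And>i j. (\<lambda>k. x k i j) \<longlonglongrightarrow> L i j"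
  shows "max_norm (x k - L) \<le> q ^ k / (1 - q) * max_norm (x 1 - x 0)"
  unfolding max_norm_le_iff
proof (intro allI)
  fix i j
  let ?c = "max_norm (x 1 - x 0) / (1 - q)"
  have "(\<lambda>m. \<bar>x m i j - x k i j\<bar>) \<longlonglongrightarrow> \<bar>L i j - x k i j\<bar>"
    by (intro tendsto_intros L)
  moreover have "(\<lambda>m. (q ^ m + q ^ k) * ?c) \<longlonglongrightarrow> (0 + q ^ k) * ?c"
    using q_nonneg q_less_1 by (intro tendsto_intros LIMSEQ_power_zero) auto
  moreover have "\<bar>x m i j - x k i j\<bar> \<le> (q ^ m + q ^ k) * ?c" for m
    using contraction_iterates_dist[of m k] abs_le_max_norm[of "x m - x k" i j] by simp
  ultimately have "\<bar>L i j - x k i j\<bar> \<le> q ^ k * ?c"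
    by (intro LIMSEQ_le) auto
  then show "\<bar>(x k - L) i j\<bar> \<le> q ^ k / (1 - q) * max_norm (x 1 - x 0)"
    by (simp add: abs_minus_commute)
qed

lemma contraction_limit_fixpoint:
  assumes "(\<lambda>k. max_norm (x k - L)) \<longlonglongrightarrow> 0"
  shows "F L = L"
proof -
  have bound: "max_norm (F L - L) \<le> q * max_norm (x k - L) + max_norm (x (Suc k) - L)" for k
  proof -
    have "max_norm (F L - L) \<le> max_norm (F L - F (x k)) + max_norm (x (Suc k) - L)"
      using max_norm_triangle[where A = "F L" and B = "x (Suc k)" and C = L] by (simp only: x_Suc)
    then show ?thesis
      using contraction[of L "x k"] unfolding max_norm_minus_commute[of L "x k"] by linarith
  qed
  have "(\<lambda>k. q * max_norm (x k - L) + max_norm (x (Suc k) - L)) \<longlonglongrightarrow> 0"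
    using assms by (intro tendsto_add_zero tendsto_mult_right_zero LIMSEQ_Suc)
  then have "max_norm (F L - L) \<le> 0"
    by (rule LIMSEQ_le_const) (use bound in blast)
  then show ?thesis by (rule max_norm_le_0_imp_eq)
qed

lemma contraction_iterates_converge:
  obtains L where "F L = L" and "\<And>k. max_norm (x k - L) \<le> q ^ k / (1 - q) * max_norm (x 1 - x 0)"
proof -
  obtain L where L: "\<And>i j. (\<lambda>k. x k i j) \<longlonglongrightarrow> L i j"
    using contraction_iterates_Cauchy unfolding Cauchy_convergent_iff convergent_def by metis
  note tail = contraction_iterates_tail[OF L]
  have "\<forall>k. norm (max_norm (x k - L)) \<le> q ^ k / (1 - q) * max_norm (x 1 - x 0)"
    using tail by (simp add: max_norm_nonneg)
  moreover have "(\<lambda>k. q ^ k / (1 - q) * max_norm (x 1 - x 0)) \<longlonglongrightarrow> 0"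
    using q_nonneg q_less_1 by (intro tendsto_mult_left_zero tendsto_divide_zero LIMSEQ_power_zero) auto
  ultimately have "(\<lambda>k. max_norm (x k - L)) \<longlonglongrightarrow> 0"
    by (rule Lim_null_comparison[OF always_eventually])
  with tail show ?thesis
    using that contraction_limit_fixpoint by blast
qed

end

end

lemma coupling_nonneg: "P \<in> couplings \<alpha> \<beta> \<Longrightarrow> 0 \<le> P i j"
  unfolding couplings_def by auto

lemma coupling_total_mass:
  assumes "P \<in> couplings \<alpha> \<beta>" "prob_vec \<alpha>"
  shows "(\<Sum>i\<in>UNIV. \<Sum>j\<in>UNIV. P i j) = 1"
  using assms unfolding couplings_def prob_vec_def by auto

lemma coupling_le_one:
  assumes P: "P \<in> couplings \<alpha> \<beta>" and "prob_vec \<alpha>"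
  shows "P i j \<le> 1"
proof -
  have "P i j \<le> (\<Sum>j'\<in>UNIV. P i j')"
    using coupling_nonneg[OF P] by (intro member_le_sum) auto
  also have "\<dots> \<le> (\<Sum>i'\<in>UNIV. \<Sum>j'\<in>UNIV. P i' j')"
    using coupling_nonneg[OF P]
    by (intro member_le_sum[where f = "\<lambda>i'. \<Sum>j'\<in>UNIV. P i' j'"] sum_nonneg) auto
  finally show ?thesis using coupling_total_mass[OF assms] by simp
qed

lemma product_coupling:
  "prob_vec \<alpha> \<Longrightarrow> prob_vec \<beta> \<Longrightarrow> (\<lambda>i j. \<alpha> i * \<beta> j) \<in> couplings \<alpha> \<beta>"
  unfolding couplings_def prob_vec_def
  by (auto simp: sum_distrib_left[symmetric] sum_distrib_right[symmetric])

lemma coupling_expectation_abs_le: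
  assumes P: "P \<in> couplings \<alpha> \<beta>" and "prob_vec \<alpha>"
  shows "\<bar>\<Sum>i\<in>UNIV. \<Sum>j\<in>UNIV. P i j * D i j\<bar> \<le> max_norm D"
proof -
  have "\<bar>\<Sum>i\<in>UNIV. \<Sum>j\<in>UNIV. P i j * D i j\<bar> \<le> (\<Sum>i\<in>UNIV. \<Sum>j\<in>UNIV. \<bar>P i j * D i j\<bar>)"
    by (intro order_trans[OF sum_abs] sum_mono sum_abs)
  also have "\<dots> \<le> (\<Sum>i\<in>UNIV. \<Sum>j\<in>UNIV. P i j * max_norm D)"
    using coupling_nonneg[OF P] abs_le_max_norm[of D]
    by (intro sum_mono) (simp add: abs_mult mult_left_mono)
  also have "\<dots> = max_norm D"
    using coupling_total_mass[OF assms] by (simp add: sum_distrib_right[symmetric])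
  finally show ?thesis .
qed

lemma xlogx_ge_tangent:
  assumes "0 \<le> p" "0 < a"
  shows "p * (ln a + 1) - a \<le> xlogx p"
proof (cases "p = 0")
  case False
  with assms have p: "0 < p" by simp
  have "p * ln (a / p) \<le> p * (a / p - 1)"
    using p assms by (intro mult_left_mono ln_le_minus_one) auto
  moreover have "p * ln (a / p) = p * ln a - p * ln p" "p * (a / p - 1) = a - p"
    using p assms by (simp_all add: ln_div right_diff_distrib)
  ultimately show ?thesis
    using False by (simp add: xlogx_def algebra_simps)
qed (use assms in \<open>simp add: xlogx_def\<close>)

lemma xlogx_nonpos: "0 \<le> p \<Longrightarrow> p \<le> 1 \<Longrightarrow> xlogx p \<le> 0"
  by (simp add: xlogx_def mult_nonneg_nonpos)

lemma coupling_entropy_le_0: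
  assumes "P \<in> couplings \<alpha> \<beta>" "prob_vec \<alpha>"
  shows "(\<Sum>i\<in>UNIV. \<Sum>j\<in>UNIV. xlogx (P i j)) \<le> 0"
  using coupling_nonneg[OF assms(1)] coupling_le_one[OF assms]
  by (intro sum_nonpos xlogx_nonpos) auto

lemma coupling_entropy_ge:
  assumes P: "P \<in> couplings \<alpha> \<beta>" and "prob_vec (\<alpha> :: 'x::finite \<Rightarrow> real)"
  shows "- ln (real (CARD('x) * CARD('y))) \<le> (\<Sum>i\<in>UNIV. \<Sum>j\<in>(UNIV :: 'y::finite set). xlogx (P i j))"
proof -
  define a where "a = 1 / real (CARD('x) * CARD('y))"
  have a: "0 < a" unfolding a_def by simp
  have "(\<Sum>i\<in>UNIV. \<Sum>j\<in>(UNIV :: 'y set). P i j * (ln a + 1) - a)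
      = (ln a + 1) * (\<Sum>i\<in>UNIV. \<Sum>j\<in>UNIV. P i j) - real (CARD('x) * CARD('y)) * a"
    by (simp add: sum_subtractf sum_distrib_left sum_distrib_right mult.commute)
  also have "\<dots> = - ln (real (CARD('x) * CARD('y)))"
    using coupling_total_mass[OF assms] by (simp add: a_def ln_div)
  finally show ?thesis
    using coupling_nonneg[OF P] a by (metis (no_types, lifting) sum_mono xlogx_ge_tangent)
qed

lemma ln_card_prod_nonneg: "0 \<le> ln (real (CARD('x::finite) * CARD('y::finite)))"
proof -
  have "1 \<le> CARD('x) * CARD('y)" by (simp add: Suc_leI)
  then have "real 1 \<le> real (CARD('x) * CARD('y))" by (rule of_nat_mono)
  then show ?thesis by (intro ln_ge_zero) simp
qed

lemma ot_cost_ge: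
  assumes "P \<in> couplings \<alpha> \<beta>" "prob_vec (\<alpha> :: 'x::finite \<Rightarrow> real)" "0 \<le> \<epsilon>"
  shows "- max_norm D - \<epsilon> * ln (real (CARD('x) * CARD('y)))
    \<le> ot_cost \<epsilon> (D :: 'x \<Rightarrow> 'y::finite \<Rightarrow> real) P"
  using coupling_expectation_abs_le[OF assms(1,2), of D]
    mult_left_mono[OF coupling_entropy_ge[OF assms(1,2)] assms(3)]
  unfolding ot_cost_def by linarith

lemma dW_le_ot_cost:
  assumes "P \<in> couplings \<alpha> \<beta>" "prob_vec \<alpha>" "0 \<le> \<epsilon>"
  shows "dW \<epsilon> \<alpha> \<beta> D \<le> ot_cost \<epsilon> D P"
  unfolding dW_def
  by (rule cINF_lower[OF bdd_belowI2[OF ot_cost_ge[OF _ assms(2,3)]] assms(1)])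

lemma dW_greatest:
  assumes "prob_vec \<alpha>" "prob_vec \<beta>" "\<And>P. P \<in> couplings \<alpha> \<beta> \<Longrightarrow> b \<le> ot_cost \<epsilon> D P"
  shows "b \<le> dW \<epsilon> \<alpha> \<beta> D"
  unfolding dW_def using product_coupling[OF assms(1,2)] assms(3) by (intro cINF_greatest) auto

lemma dW_le_dW_add:
  assumes \<alpha>: "prob_vec \<alpha>" and \<beta>: "prob_vec \<beta>" and \<epsilon>: "0 \<le> \<epsilon>"
  shows "dW \<epsilon> \<alpha> \<beta> D \<le> dW \<epsilon> \<alpha> \<beta> D' + max_norm (D - D')"
proof -
  have "dW \<epsilon> \<alpha> \<beta> D - max_norm (D - D') \<le> ot_cost \<epsilon> D' P" if P: "P \<in> couplings \<alpha> \<beta>" for P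
  proof -
    have "ot_cost \<epsilon> D P - ot_cost \<epsilon> D' P = (\<Sum>i\<in>UNIV. \<Sum>j\<in>UNIV. P i j * (D - D') i j)"
      unfolding ot_cost_def by (simp add: sum_subtractf algebra_simps)
    then show ?thesis
      using dW_le_ot_cost[OF P \<alpha> \<epsilon>, of D] coupling_expectation_abs_le[OF P \<alpha>, of "D - D'"]
      by linarith
  qed
  then show ?thesis using dW_greatest[OF \<alpha> \<beta>] by fastforce
qed

lemma dW_lipschitz:
  assumes "prob_vec \<alpha>" "prob_vec \<beta>" "0 \<le> \<epsilon>"
  shows "\<bar>dW \<epsilon> \<alpha> \<beta> D - dW \<epsilon> \<alpha> \<beta> D'\<bar> \<le> max_norm (D - D')"
  using dW_le_dW_add[OF assms, of D D'] dW_le_dW_add[OF assms, of D' D]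
  by (simp add: max_norm_minus_commute abs_le_iff)

lemma dW_le_max_norm:
  assumes \<alpha>: "prob_vec \<alpha>" and \<beta>: "prob_vec \<beta>" and \<epsilon>: "0 \<le> \<epsilon>"
  shows "dW \<epsilon> \<alpha> \<beta> D \<le> max_norm D"
proof -
  have P: "(\<lambda>i j. \<alpha> i * \<beta> j) \<in> couplings \<alpha> \<beta>" by (rule product_coupling[OF \<alpha> \<beta>])
  show ?thesis
    using dW_le_ot_cost[OF P \<alpha> \<epsilon>, of D] coupling_expectation_abs_le[OF P \<alpha>, of D]
      mult_left_mono[OF coupling_entropy_le_0[OF P \<alpha>] \<epsilon>]
    unfolding ot_cost_def by linarith
qed

lemma dW_lower_bound:
  assumes \<alpha>: "prob_vec (\<alpha> :: 'x::finite \<Rightarrow> real)" and \<beta>: "prob_vec \<beta>" and \<epsilon>: "0 \<le> \<epsilon>"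
    and C: "\<forall>i j. 0 \<le> (C :: 'x \<Rightarrow> 'y::finite \<Rightarrow> real) i j"
  shows "- (\<epsilon> * ln (real (CARD('x) * CARD('y)))) \<le> dW \<epsilon> \<alpha> \<beta> C"
proof (rule dW_greatest[OF \<alpha> \<beta>])
  fix P assume P: "P \<in> couplings \<alpha> \<beta>"
  have "0 \<le> (\<Sum>i\<in>UNIV. \<Sum>j\<in>UNIV. P i j * C i j)"
    using coupling_nonneg[OF P] C by (intro sum_nonneg) auto
  then show "- (\<epsilon> * ln (real (CARD('x) * CARD('y)))) \<le> ot_cost \<epsilon> C P"
    using mult_left_mono[OF coupling_entropy_ge[OF P \<alpha>] \<epsilon>] unfolding ot_cost_def by linarith
qed

lemma abs_dW_minus_entry_le:
  assumes "prob_vec (\<alpha> :: 'x::finite \<Rightarrow> real)" "prob_vec \<beta>" "0 \<le> \<epsilon>"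
    and C: "\<forall>i j. 0 \<le> (C :: 'x \<Rightarrow> 'y::finite \<Rightarrow> real) i j"
  shows "\<bar>dW \<epsilon> \<alpha> \<beta> C - C i j\<bar> \<le> max_norm C + \<epsilon> * ln (real (CARD('x) * CARD('y)))"
  using dW_le_max_norm[OF assms(1-3), of C] dW_lower_bound[OF assms]
    C[rule_format, of i j] abs_le_max_norm[of C i j]
    mult_nonneg_nonneg[OF assms(3) ln_card_prod_nonneg[where 'x = 'x and 'y = 'y]]
  by (simp add: abs_le_iff)

lemma WL_step_contraction:
  assumes "\<forall>i. prob_vec (mX i)" "\<forall>j. prob_vec (mY j)" "0 \<le> \<epsilon>" "\<delta> \<le> 1"
  shows "max_norm (WL_step \<epsilon> \<delta> mX mY C D - WL_step \<epsilon> \<delta> mX mY C D')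
    \<le> (1 - \<delta>) * max_norm (D - D')"
  unfolding max_norm_le_iff
proof (intro allI)
  fix i j
  have "(WL_step \<epsilon> \<delta> mX mY C D - WL_step \<epsilon> \<delta> mX mY C D') i j
      = (1 - \<delta>) * (dW \<epsilon> (mX i) (mY j) D - dW \<epsilon> (mX i) (mY j) D')"
    by (simp add: WL_step_def algebra_simps)
  then show "\<bar>(WL_step \<epsilon> \<delta> mX mY C D - WL_step \<epsilon> \<delta> mX mY C D') i j\<bar>
      \<le> (1 - \<delta>) * max_norm (D - D')"
    using dW_lipschitz[of "mX i" "mY j" \<epsilon> D D'] assms by (simp add: abs_mult mult_left_mono)
qed

lemma WL_step_displacement:
  assumes "\<forall>i. prob_vec (mX i)" "\<forall>j. prob_vec (mY j)" "0 \<le> \<epsilon>" "\<delta> \<le> 1"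
    "\<forall>i j. 0 \<le> (C :: 'x::finite \<Rightarrow> 'y::finite \<Rightarrow> real) i j"
  shows "max_norm (WL_step \<epsilon> \<delta> mX mY C C - C)
    \<le> (1 - \<delta>) * (max_norm C + \<epsilon> * ln (real (CARD('x) * CARD('y))))"
  unfolding max_norm_le_iff
proof (intro allI)
  fix i j
  have "(WL_step \<epsilon> \<delta> mX mY C C - C) i j = (1 - \<delta>) * (dW \<epsilon> (mX i) (mY j) C - C i j)"
    by (simp add: WL_step_def algebra_simps)
  then show "\<bar>(WL_step \<epsilon> \<delta> mX mY C C - C) i j\<bar>
      \<le> (1 - \<delta>) * (max_norm C + \<epsilon> * ln (real (CARD('x) * CARD('y))))"
    using abs_dW_minus_entry_le[of "mX i" "mY j" \<epsilon> C i j] assms by (simp add: abs_mult mult_left_mono)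
qed

lemma C_iter_dist_C_inf:
  assumes rows: "\<forall>i. prob_vec (mX i)" "\<forall>j. prob_vec (mY j)" and "0 \<le> \<epsilon>" "0 < \<delta>" "\<delta> \<le> 1"
    and C: "\<forall>i j. 0 \<le> (C :: 'x::finite \<Rightarrow> 'y::finite \<Rightarrow> real) i j"
  shows "max_norm (C_iter \<epsilon> \<delta> mX mY C k - C_inf \<epsilon> \<delta> mX mY C)
    \<le> (1 - \<delta>) ^ k / \<delta> * (max_norm C + \<epsilon> * ln (real (CARD('x) * CARD('y))))"
proof -
  let ?F = "WL_step \<epsilon> \<delta> mX mY C" and ?x = "C_iter \<epsilon> \<delta> mX mY C"
  let ?A = "max_norm C + \<epsilon> * ln (real (CARD('x) * CARD('y)))"
  have contr: "max_norm (?F D - ?F D') \<le> (1 - \<delta>) * max_norm (D - D')" for D D'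
    using WL_step_contraction rows assms(3,5) by blast
  have q: "0 \<le> 1 - \<delta>" "1 - \<delta> < 1" using assms(4,5) by auto
  have x_Suc: "?x (Suc l) = ?F (?x l)" for l by simp
  obtain L where fixpoint: "?F L = L"
    and L: "max_norm (?x k - L) \<le> (1 - \<delta>) ^ k / (1 - (1 - \<delta>)) * max_norm (?x 1 - ?x 0)"
    using contraction_iterates_converge[where F = ?F and q = "1 - \<delta>" and x = ?x, OF contr q x_Suc] by blast
  have C_inf: "C_inf \<epsilon> \<delta> mX mY C = L"
    unfolding C_inf_def
    using fixpoint contraction_fixpoint_unique[where F = ?F, OF contr q _ fixpoint] by (rule the_equality)
  have displacement: "max_norm (?x 1 - ?x 0) \<le> ?A"
  proof -
    have "0 \<le> ?A"
      using max_norm_nonneg[of C] mult_nonneg_nonneg[OF assms(3) ln_card_prod_nonneg[where 'x = 'x and 'y = 'y]]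
      by linarith
    moreover have "max_norm (?x 1 - ?x 0) \<le> (1 - \<delta>) * ?A"
      unfolding One_nat_def C_iter.simps by (rule WL_step_displacement[OF rows assms(3,5) C])
    ultimately show ?thesis
      using mult_left_le_one_le[of ?A "1 - \<delta>"] q by linarith
  qed
  have "1 - (1 - \<delta>) = \<delta>" by simp
  with L have "max_norm (?x k - C_inf \<epsilon> \<delta> mX mY C) \<le> (1 - \<delta>) ^ k / \<delta> * max_norm (?x 1 - ?x 0)"
    unfolding C_inf by simp
  also have "\<dots> \<le> (1 - \<delta>) ^ k / \<delta> * ?A"
    using displacement q(1) assms(4) by (intro mult_left_mono) auto
  finally show ?thesis .
qed

theorem proposition38:
  fixes mX :: "'x::finite \<Rightarrow> 'x \<Rightarrow> real" and \<nu>X :: "'x \<Rightarrow> real"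
    and mY :: "'y::finite \<Rightarrow> 'y \<Rightarrow> real" and \<nu>Y :: "'y \<Rightarrow> real"
    and C :: "'x \<Rightarrow> 'y \<Rightarrow> real" and \<delta> \<epsilon> :: real
  assumes "markov_chain mX \<nu>X" and "markov_chain mY \<nu>Y"
    and "\<forall>i j. C i j \<ge> 0"
    and "0 < \<delta>" and "\<delta> \<le> 1" and "0 \<le> \<epsilon>"
  shows "(\<lambda>k. dWL \<epsilon> \<delta> mX \<nu>X mY \<nu>Y C k) \<longlonglongrightarrow> dW \<epsilon> \<nu>X \<nu>Y (C_inf \<epsilon> \<delta> mX mY C)
    \<and> (\<forall>k::nat. \<bar>dWL \<epsilon> \<delta> mX \<nu>X mY \<nu>Y C k - dW \<epsilon> \<nu>X \<nu>Y (C_inf \<epsilon> \<delta> mX mY C)\<bar>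
          \<le> (1 - \<delta>) ^ k / \<delta> * (2 * max_norm C + \<epsilon> * ln (real (CARD('x) * CARD('y)))))"
proof -
  let ?d = "dW \<epsilon> \<nu>X \<nu>Y (C_inf \<epsilon> \<delta> mX mY C)"
  define B where "B = 2 * max_norm C + \<epsilon> * ln (real (CARD('x) * CARD('y)))"
  have rows: "\<forall>i. prob_vec (mX i)" "\<forall>j. prob_vec (mY j)" and \<nu>: "prob_vec \<nu>X" "prob_vec \<nu>Y"
    using assms(1,2) unfolding markov_chain_def by auto
  have bound: "\<bar>dWL \<epsilon> \<delta> mX \<nu>X mY \<nu>Y C k - ?d\<bar> \<le> (1 - \<delta>) ^ k / \<delta> * B" for k
  proof -
    have "\<bar>dWL \<epsilon> \<delta> mX \<nu>X mY \<nu>Y C k - ?d\<bar> \<le> max_norm (C_iter \<epsilon> \<delta> mX mY C k - C_inf \<epsilon> \<delta> mX mY C)"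
      unfolding dWL_def by (rule dW_lipschitz[OF \<nu> assms(6)])
    also have "\<dots> \<le> (1 - \<delta>) ^ k / \<delta> * (max_norm C + \<epsilon> * ln (real (CARD('x) * CARD('y))))"
      by (rule C_iter_dist_C_inf[OF rows assms(6,4,5,3)])
    also have "\<dots> \<le> (1 - \<delta>) ^ k / \<delta> * B"
      unfolding B_def using max_norm_nonneg[of C] assms(4,5) by (intro mult_left_mono) auto
    finally show ?thesis .
  qed
  then have "\<forall>k. norm (dWL \<epsilon> \<delta> mX \<nu>X mY \<nu>Y C k - ?d) \<le> (1 - \<delta>) ^ k / \<delta> * B"
    by simp
  moreover have "(\<lambda>k. (1 - \<delta>) ^ k / \<delta> * B) \<longlonglongrightarrow> 0"
    using assms(4,5) by (intro tendsto_mult_left_zero tendsto_divide_zero LIMSEQ_power_zero) auto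
  ultimately have "(\<lambda>k. dWL \<epsilon> \<delta> mX \<nu>X mY \<nu>Y C k - ?d) \<longlonglongrightarrow> 0"
    by (rule Lim_null_comparison[OF always_eventually])
  then show ?thesis
    using bound unfolding B_def by (simp add: LIM_zero_cancel)
qed

end
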